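(* For any MeanEstimation algorithm (possibly using shared randomness) in which any machine receives at most $b$ bits in expectation, there is a valid input for which $\mathbb{E}[\|\mathbf{EST}-\boldsymbol\mu\|^2]=\Omega\!\left(y^2\,2^{-3b/d}\right)$.
   Context: MeanEstimation: there are $n$ machines; machine $v$ receives $\mathbf{x}_v\in\mathbb{R}^d$, and all receive a common $y$ with $\|\mathbf{x}_u-\mathbf{x}_v\|\le y$ for all $u,v$. All machines must output the same $\mathbf{EST}\in\mathbb{R}^d$ with $\mathbb{E}[\mathbf{EST}]=\boldsymbol\mu=\frac1n\sum_v\mathbf{x}_v$. $\|\cdot\|$ is a fixed one of the $\ell_1,\ell_2,\ell_\infty$ norms. Algorithms may use a common random string available to all machines. Bits received by a machine count all bits it receives from any source during the algorithm. The hidden constant is absolute. *)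

theory Defs
  imports "HOL-Probability.Probability"
begin

text \<open>Vectors of R^d are represented as functions nat => real that vanish
  outside the index set {..<d}; machines are 0,...,n-1.\<close>

datatype norm_kind = L1 | L2 | Linf

definition vnorm :: "norm_kind \<Rightarrow> nat \<Rightarrow> (nat \<Rightarrow> real) \<Rightarrow> real" where
  "vnorm k d z = (case k of
      L1 \<Rightarrow> (\<Sum>i<d. \<bar>z i\<bar>)
    | L2 \<Rightarrow> sqrt (\<Sum>i<d. (z i)^2)
    | Linf \<Rightarrow> Max (insert 0 ((\<lambda>i. \<bar>z i\<bar>) ` {..<d})))"

definition is_vec :: "nat \<Rightarrow> (nat \<Rightarrow> real) \<Rightarrow> bool" where
  "is_vec d z \<longleftrightarrow> (\<forall>i\<ge>d. z i = 0)"

definition valid_input :: "nat \<Rightarrow> nat \<Rightarrow> norm_kind \<Rightarrow> real \<Rightarrow> (nat \<Rightarrow> nat \<Rightarrow> real) \<Rightarrow> bool" where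
  "valid_input n d k y x \<longleftrightarrow>
     (\<forall>v\<ge>n. x v = (\<lambda>_. 0)) \<and> (\<forall>v<n. is_vec d (x v)) \<and>
     (\<forall>u<n. \<forall>v<n. vnorm k d (x u - x v) \<le> y)"

definition mean :: "nat \<Rightarrow> (nat \<Rightarrow> nat \<Rightarrow> real) \<Rightarrow> nat \<Rightarrow> real" where
  "mean n x = (\<lambda>i. (\<Sum>v<n. x v i) / real n)"

definition random_string :: "(nat \<Rightarrow> bool) measure" where
  "random_string = PiM UNIV (\<lambda>_. measure_pmf (bernoulli_pmf (1/2)))"

text \<open>An algorithm is abstracted by, for each machine v,
  rcv v x r : the bit string received by machine v (all bits it receives, from any
              source) on input x with random string r, and
  out v xv r s : machine v's output, a function of its own input xv, the random string r
              and the received bits s.\<close>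
definition EST ::
  "(nat \<Rightarrow> (nat \<Rightarrow> real) \<Rightarrow> (nat \<Rightarrow> bool) \<Rightarrow> bool list \<Rightarrow> nat \<Rightarrow> real) \<Rightarrow>
   (nat \<Rightarrow> (nat \<Rightarrow> nat \<Rightarrow> real) \<Rightarrow> (nat \<Rightarrow> bool) \<Rightarrow> bool list) \<Rightarrow>
   (nat \<Rightarrow> nat \<Rightarrow> real) \<Rightarrow> (nat \<Rightarrow> bool) \<Rightarrow> nat \<Rightarrow> real" where
  "EST out rcv x r = out 0 (x 0) r (rcv 0 x r)"

definition mean_estimation_alg ::
  "nat \<Rightarrow> nat \<Rightarrow> norm_kind \<Rightarrow> real \<Rightarrow>
   (nat \<Rightarrow> (nat \<Rightarrow> nat \<Rightarrow> real) \<Rightarrow> (nat \<Rightarrow> bool) \<Rightarrow> bool list) \<Rightarrow>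
   (nat \<Rightarrow> (nat \<Rightarrow> real) \<Rightarrow> (nat \<Rightarrow> bool) \<Rightarrow> bool list \<Rightarrow> nat \<Rightarrow> real) \<Rightarrow> bool" where
  "mean_estimation_alg n d k y rcv out \<longleftrightarrow>
     (\<forall>x. valid_input n d k y x \<longrightarrow>
        (\<forall>v<n. rcv v x \<in> random_string \<rightarrow>\<^sub>M count_space UNIV) \<and>
        (\<forall>r\<in>space random_string. \<forall>v<n. out v (x v) r (rcv v x r) = EST out rcv x r) \<and>
        (\<forall>i<d. integrable random_string (\<lambda>r. EST out rcv x r i) \<and>
               (\<integral>r. EST out rcv x r i \<partial>random_string) = mean n x i))"

definition receives_at_most ::
  "nat \<Rightarrow> nat \<Rightarrow> norm_kind \<Rightarrow> real \<Rightarrow>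
   (nat \<Rightarrow> (nat \<Rightarrow> nat \<Rightarrow> real) \<Rightarrow> (nat \<Rightarrow> bool) \<Rightarrow> bool list) \<Rightarrow> real \<Rightarrow> bool" where
  "receives_at_most n d k y rcv b \<longleftrightarrow>
     (\<forall>x. valid_input n d k y x \<longrightarrow>
        (\<forall>v<n. (\<integral>\<^sup>+ r. ennreal (real (length (rcv v x r))) \<partial>random_string) \<le> ennreal b))"

end

theory Submission
  imports Defs
begin

(* Machine 0 receives the zero vector and every other machine the same point z_a = h a of the grid
   {0,...,m-1}^d, scaled so that all these inputs are valid; the mean is then (n-1)/n z_a, and EST,
   computed by machine 0, depends on a only through the bits machine 0 receives. For a fixed random
   string, a message of at most L bits yields one output, and rounding it coordinatewise to the
   grid of means recovers a in all but d/5 coordinates for at most 2^d m^(d/5) grid points; every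
   other grid point reached by a short message has squared error at least y^2/(400 m^2), in each of
   the three norms. For m = 2^Theta(1 + b/d) and L = Theta(b) these exceptions make up at most 1/12
   of the grid, and by Markov's inequality the budget of b expected bits makes messages longer than
   L rare, so averaging over the grid yields a grid point whose expected squared error is
   Omega(y^2/m^2) = Omega(y^2 2^(-3b/d)). *)

lemma vnorm_uminus [simp]: "vnorm k d (- z) = vnorm k d z"
  by (cases k) (simp_all add: vnorm_def)

lemma vnorm_zero [simp]: "vnorm k d (\<lambda>_. 0) = 0"
  by (cases k) (simp_all add: vnorm_def image_constant_conv)

lemma vnorm_mono_abs:
  assumes "\<And>i. i < d \<Longrightarrow> \<bar>z i\<bar> \<le> \<bar>w i\<bar>"
  shows "vnorm k d z \<le> vnorm k d w"
proof (cases k)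
  case L1
  then show ?thesis using assms by (auto simp: vnorm_def intro: sum_mono)
next
  case L2
  have "(\<Sum>i<d. (z i)\<^sup>2) \<le> (\<Sum>i<d. (w i)\<^sup>2)"
    using assms by (intro sum_mono) (simp add: abs_le_square_iff)
  then show ?thesis using L2 by (simp add: vnorm_def)
next
  case Linf
  then show ?thesis using assms
    by (auto simp: vnorm_def Max_le_iff intro: order_trans[OF _ Max_ge])
qed

lemma vnorm_const: "vnorm k d (\<lambda>_. c) = \<bar>c\<bar> * vnorm k d (\<lambda>_. 1)"
proof (cases k)
  case L2
  then show ?thesis by (simp add: vnorm_def power_mult_distrib real_sqrt_mult)
next
  case Linf
  then show ?thesis by (cases "d = 0") (simp_all add: vnorm_def image_constant_conv)
qed (simp add: vnorm_def)

lemma vnorm_ones_pos: "1 \<le> d \<Longrightarrow> 0 < vnorm k d (\<lambda>_. 1)"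
  by (cases k) (auto simp: vnorm_def image_constant_conv lessThan_empty_iff)

lemma vnorm_ge_of_many_large_coords:
  assumes q: "0 \<le> q" and large: "real d \<le> 5 * real (card {i \<in> {..<d}. q \<le> \<bar>e i\<bar>})"
  shows "q * vnorm k d (\<lambda>_. 1) / 5 \<le> vnorm k d e"
proof -
  define W where "W = {i \<in> {..<d}. q \<le> \<bar>e i\<bar>}"
  have W: "W \<subseteq> {..<d}" "finite W" and many: "real d \<le> 5 * real (card W)"
    using large by (auto simp: W_def)
  show ?thesis
  proof (cases k)
    case L1
    have "q * real d / 5 \<le> (\<Sum>i\<in>W. q)"
      using mult_left_mono[OF many q] by (simp add: algebra_simps)
    also have "\<dots> \<le> (\<Sum>i\<in>W. \<bar>e i\<bar>)" by (rule sum_mono) (simp add: W_def)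
    also have "\<dots> \<le> (\<Sum>i<d. \<bar>e i\<bar>)" using W by (intro sum_mono2) auto
    finally show ?thesis using L1 by (simp add: vnorm_def)
  next
    case L2
    have "(q * sqrt (real d) / 5)\<^sup>2 = q\<^sup>2 * real d / 25"
      by (simp add: power_mult_distrib power_divide)
    also have "\<dots> \<le> q\<^sup>2 * real d / 5" by simp
    also have "\<dots> \<le> (\<Sum>i\<in>W. q\<^sup>2)"
      using mult_left_mono[OF many, of "q\<^sup>2"] by (simp add: algebra_simps)
    also have "\<dots> \<le> (\<Sum>i\<in>W. (e i)\<^sup>2)"
      using q by (intro sum_mono) (metis W_def abs_le_square_iff abs_of_nonneg mem_Collect_eq)
    also have "\<dots> \<le> (\<Sum>i<d. (e i)\<^sup>2)" using W by (intro sum_mono2) auto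
    finally have "q * sqrt (real d) / 5 \<le> sqrt (\<Sum>i<d. (e i)\<^sup>2)" by (rule real_le_rsqrt)
    then show ?thesis using L2 by (simp add: vnorm_def)
  next
    case Linf
    show ?thesis
    proof (cases "d = 0")
      case False
      then have "W \<noteq> {}" using many by auto
      then obtain i where i: "i < d" "q \<le> \<bar>e i\<bar>" by (auto simp: W_def)
      have "q \<le> Max (insert 0 ((\<lambda>i. \<bar>e i\<bar>) ` {..<d}))"
        using i by (intro order_trans[OF i(2)] Max_ge) auto
      then have "q \<le> vnorm k d e" using Linf by (simp add: vnorm_def)
      moreover have "vnorm k d (\<lambda>_. 1) = 1"
        using Linf False by (simp add: vnorm_def image_constant_conv lessThan_empty_iff)
      ultimately show ?thesis using q by simp
    qed (simp add: Linf vnorm_def)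
  qed
qed

definition grid :: "nat \<Rightarrow> nat \<Rightarrow> (nat \<Rightarrow> nat) set" where
  "grid d m = PiE {..<d} (\<lambda>_. {..<m})"

definition grid_vec :: "nat \<Rightarrow> real \<Rightarrow> (nat \<Rightarrow> nat) \<Rightarrow> nat \<Rightarrow> real" where
  "grid_vec d h a = (\<lambda>i. if i < d then h * real (a i) else 0)"

lemma finite_grid [simp]: "finite (grid d m)"
  by (simp add: grid_def finite_PiE)

lemma card_grid: "card (grid d m) = m ^ d"
  by (simp add: grid_def card_PiE)

lemma vnorm_grid_vec_le:
  assumes "0 \<le> h" and "a \<in> grid d m"
  shows "vnorm k d (grid_vec d h a) \<le> h * real m * vnorm k d (\<lambda>_. 1)"
proof -
  have "vnorm k d (grid_vec d h a) \<le> vnorm k d (\<lambda>_. h * real m)"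
  proof (rule vnorm_mono_abs)
    fix i assume "i < d"
    then have "a i < m" using assms(2) by (auto simp: grid_def)
    then show "\<bar>grid_vec d h a i\<bar> \<le> \<bar>h * real m\<bar>"
      using assms(1) \<open>i < d\<close> by (simp add: grid_vec_def) (simp add: mult_left_mono less_imp_le)
  qed
  also have "\<dots> = h * real m * vnorm k d (\<lambda>_. 1)"
    using assms(1) vnorm_const[of k d "h * real m"] by simp
  finally show ?thesis .
qed

lemma card_bool_lists_length_le: "card {w :: bool list. length w \<le> L} \<le> 2 ^ Suc L"
proof -
  have "card {w :: bool list. length w \<le> L} = (\<Sum>i\<le>L. 2 ^ i)"
    using card_lists_length_le[of "UNIV :: bool set" L] by simp
  also have "(\<Sum>i\<le>L. 2 ^ i :: nat) < 2 ^ Suc L"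
    by (induction L) auto
  finally show ?thesis by simp
qed

lemma finite_bool_lists_length_le: "finite {w :: bool list. length w \<le> L}"
  using finite_lists_length_le[of "UNIV :: bool set" L] by simp

lemma card_grid_agree_outside_le:
  assumes uniq: "\<And>i p q. i < d \<Longrightarrow> P i p \<Longrightarrow> P i q \<Longrightarrow> p = q" and S: "S \<subseteq> {..<d}"
  shows "card {a \<in> grid d m. \<forall>i \<in> {..<d} - S. P i (a i)} \<le> m ^ card S"
proof -
  define T where "T = {a \<in> grid d m. \<forall>i \<in> {..<d} - S. P i (a i)}"
  have "inj_on (\<lambda>a. restrict a S) T"
  proof (rule inj_onI)
    fix a b assume a: "a \<in> T" and b: "b \<in> T" and ab: "restrict a S = restrict b S"
    show "a = b"
    proof
      fix i
      consider "i \<in> S" | "i \<in> {..<d} - S" | "i \<notin> {..<d}" using S by blast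
      then show "a i = b i"
      proof cases
        case 1
        then show ?thesis using ab by (metis restrict_apply')
      next
        case 2
        then show ?thesis using a b uniq by (auto simp: T_def)
      next
        case 3
        then show ?thesis using a b by (auto simp: T_def grid_def PiE_def extensional_def)
      qed
    qed
  qed
  moreover have "(\<lambda>a. restrict a S) ` T \<subseteq> PiE S (\<lambda>_. {..<m})"
    using S by (auto simp: T_def grid_def PiE_def Pi_def)
  moreover have "finite S" using S finite_subset by blast
  ultimately have "card T \<le> card (PiE S (\<lambda>_. {..<m}))"
    by (intro card_inj_on_le) (auto simp: finite_PiE)
  also have "\<dots> = m ^ card S" using \<open>finite S\<close> by (simp add: card_PiE)
  finally show ?thesis unfolding T_def .
qed

lemma card_grid_few_mismatches_le:
  assumes uniq: "\<And>i p q. i < d \<Longrightarrow> P i p \<Longrightarrow> P i q \<Longrightarrow> p = q" and m: "1 \<le> m"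
  shows "card {a \<in> grid d m. card {i \<in> {..<d}. \<not> P i (a i)} \<le> t} \<le> 2 ^ d * m ^ t"
proof -
  define T where "T S = {a \<in> grid d m. \<forall>i \<in> {..<d} - S. P i (a i)}" for S
  define \<S> where "\<S> = {S. S \<subseteq> {..<d} \<and> card S \<le> t}"
  have fin: "finite \<S>" by (simp add: \<S>_def)
  have "{a \<in> grid d m. card {i \<in> {..<d}. \<not> P i (a i)} \<le> t} \<subseteq> (\<Union>S\<in>\<S>. T S)"
  proof
    fix a assume a: "a \<in> {a \<in> grid d m. card {i \<in> {..<d}. \<not> P i (a i)} \<le> t}"
    then have "{i \<in> {..<d}. \<not> P i (a i)} \<in> \<S>" and "a \<in> T {i \<in> {..<d}. \<not> P i (a i)}"
      unfolding \<S>_def T_def by auto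
    then show "a \<in> (\<Union>S\<in>\<S>. T S)" by blast
  qed
  then have "card {a \<in> grid d m. card {i \<in> {..<d}. \<not> P i (a i)} \<le> t} \<le> card (\<Union>S\<in>\<S>. T S)"
    using fin by (intro card_mono) (auto simp: T_def)
  also have "\<dots> \<le> (\<Sum>S\<in>\<S>. card (T S))" by (rule card_UN_le[OF fin])
  also have "\<dots> \<le> (\<Sum>S\<in>\<S>. m ^ t)"
  proof (rule sum_mono)
    fix S assume "S \<in> \<S>"
    then have "card (T S) \<le> m ^ card S"
      unfolding T_def \<S>_def by (intro card_grid_agree_outside_le uniq) auto
    also have "\<dots> \<le> m ^ t" using \<open>S \<in> \<S>\<close> m by (intro power_increasing) (auto simp: \<S>_def)
    finally show "card (T S) \<le> m ^ t" .
  qed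
  also have "\<dots> = card \<S> * m ^ t" by simp
  also have "\<dots> \<le> 2 ^ d * m ^ t"
  proof -
    have "card \<S> \<le> card (Pow {..<d})" by (rule card_mono) (auto simp: \<S>_def)
    then show ?thesis by (simp add: card_Pow)
  qed
  finally show ?thesis .
qed

lemma card_grid_short_code_few_mismatches_le:
  fixes s :: "(nat \<Rightarrow> nat) \<Rightarrow> bool list"
  assumes uniq: "\<And>w i p q. i < d \<Longrightarrow> P w i p \<Longrightarrow> P w i q \<Longrightarrow> p = q" and m: "1 \<le> m"
  shows "card {a \<in> grid d m. length (s a) \<le> L \<and> card {i \<in> {..<d}. \<not> P (s a) i (a i)} \<le> t}
           \<le> 2 ^ Suc L * (2 ^ d * m ^ t)"
proof -
  define W where "W = {w :: bool list. length w \<le> L}"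
  define B where "B w = {a \<in> grid d m. card {i \<in> {..<d}. \<not> P w i (a i)} \<le> t}" for w
  have fin: "finite W" by (simp add: W_def finite_bool_lists_length_le)
  have "{a \<in> grid d m. length (s a) \<le> L \<and> card {i \<in> {..<d}. \<not> P (s a) i (a i)} \<le> t}
          \<subseteq> (\<Union>w\<in>W. B w)"
    by (auto simp: W_def B_def)
  then have "card {a \<in> grid d m. length (s a) \<le> L \<and> card {i \<in> {..<d}. \<not> P (s a) i (a i)} \<le> t}
               \<le> card (\<Union>w\<in>W. B w)"
    using fin by (intro card_mono) (auto simp: B_def)
  also have "\<dots> \<le> (\<Sum>w\<in>W. card (B w))" by (rule card_UN_le[OF fin])
  also have "\<dots> \<le> (\<Sum>w\<in>W. 2 ^ d * m ^ t)"
    unfolding B_def by (intro sum_mono card_grid_few_mismatches_le uniq m)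
  also have "\<dots> \<le> 2 ^ Suc L * (2 ^ d * m ^ t)"
    using card_bool_lists_length_le[of L] by (simp add: W_def)
  finally show ?thesis .
qed

lemma card_grid_le_far_plus_long:
  fixes F :: "bool list \<Rightarrow> nat \<Rightarrow> real" and s :: "(nat \<Rightarrow> nat) \<Rightarrow> bool list"
  assumes g: "0 < g" and m: "1 \<le> m"
  shows "card (grid d m)
           \<le> card {a \<in> grid d m. g * vnorm k d (\<lambda>_. 1) / 10 \<le> vnorm k d (F (s a) - grid_vec d g a)}
             + card {a \<in> grid d m. L < length (s a)} + 2 ^ Suc L * (2 ^ d * m ^ (d div 5))"
proof -
  define P where "P w i p \<longleftrightarrow> \<bar>F w i - g * real p\<bar> < g / 2" for w i and p :: nat
  define far where
    "far = {a \<in> grid d m. g * vnorm k d (\<lambda>_. 1) / 10 \<le> vnorm k d (F (s a) - grid_vec d g a)}"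
  define long where "long = {a \<in> grid d m. L < length (s a)}"
  define near where
    "near = {a \<in> grid d m. length (s a) \<le> L \<and> card {i \<in> {..<d}. \<not> P (s a) i (a i)} \<le> d div 5}"
  have P_unique: "p = q" if "P w i p" "P w i q" for w i p q
  proof -
    have "\<bar>g * real p - g * real q\<bar> < g"
      using that unfolding P_def abs_less_iff by linarith
    then have "g * \<bar>real p - real q\<bar> < g * 1"
      using g by (simp add: abs_mult flip: right_diff_distrib)
    then have "\<bar>real p - real q\<bar> < 1" using g by (simp only: mult_less_cancel_left_pos)
    then show ?thesis by linarith
  qed
  have "grid d m \<subseteq> far \<union> long \<union> near"
  proof
    fix a assume a: "a \<in> grid d m"
    have mismatch: "{i \<in> {..<d}. \<not> P (s a) i (a i)}
        = {i \<in> {..<d}. g / 2 \<le> \<bar>(F (s a) - grid_vec d g a) i\<bar>}"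
      by (auto simp: P_def grid_vec_def)
    show "a \<in> far \<union> long \<union> near"
    proof (cases "a \<in> long \<union> near")
      case False
      then have "real d \<le> 5 * real (card {i \<in> {..<d}. \<not> P (s a) i (a i)})"
        using a by (auto simp: long_def near_def)
      then have "g / 2 * vnorm k d (\<lambda>_. 1) / 5 \<le> vnorm k d (F (s a) - grid_vec d g a)"
        unfolding mismatch using g by (intro vnorm_ge_of_many_large_coords) auto
      then show ?thesis using a by (simp add: far_def)
    qed blast
  qed
  then have "card (grid d m) \<le> card (far \<union> long \<union> near)"
    by (intro card_mono) (auto simp: far_def long_def near_def)
  also have "\<dots> \<le> card far + card long + card near"
    by (meson add_mono card_Un_le le_refl order_trans)
  also have "card near \<le> 2 ^ Suc L * (2 ^ d * m ^ (d div 5))"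
    unfolding near_def by (intro card_grid_short_code_few_mismatches_le P_unique m)
  finally show ?thesis by (simp add: far_def long_def)
qed

definition hard_input :: "nat \<Rightarrow> (nat \<Rightarrow> real) \<Rightarrow> nat \<Rightarrow> nat \<Rightarrow> real" where
  "hard_input n z = (\<lambda>v. if 0 < v \<and> v < n then z else (\<lambda>_. 0))"

lemma valid_input_hard_input:
  assumes "is_vec d z" and "vnorm k d z \<le> y" and "0 \<le> y"
  shows "valid_input n d k y (hard_input n z)"
proof -
  have "vnorm k d (hard_input n z u - hard_input n z v) \<le> y" for u v
  proof -
    have "hard_input n z u - hard_input n z v \<in> {\<lambda>_. 0, z, - z}"
      by (auto simp: hard_input_def fun_eq_iff)
    then show ?thesis using assms by auto
  qed
  moreover have "is_vec d (hard_input n z v)" for v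
    using assms(1) by (simp add: hard_input_def is_vec_def)
  moreover have "hard_input n z v = (\<lambda>_. 0)" if "n \<le> v" for v
    using that by (simp add: hard_input_def)
  ultimately show ?thesis unfolding valid_input_def by blast
qed

lemma mean_hard_input: "mean n (hard_input n z) = (\<lambda>i. real (n - 1) / real n * z i)"
proof
  fix i
  have "(\<Sum>v<n. hard_input n z v i) = (\<Sum>v \<in> {..<n} - {0}. z i)"
    by (rule sum.mono_neutral_cong_right) (auto simp: hard_input_def)
  also have "\<dots> = real (n - 1) * z i"
    by (cases n) (simp_all add: card_Diff_singleton_if)
  finally show "mean n (hard_input n z) i = real (n - 1) / real n * z i"
    by (simp add: mean_def)
qed

lemma prob_space_random_string: "prob_space random_string"
  unfolding random_string_def by (intro prob_space_PiM) (simp add: prob_space_measure_pmf)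

lemma borel_measurable_vnorm:
  assumes "\<And>i. i < d \<Longrightarrow> (\<lambda>r. G r i) \<in> borel_measurable M"
  shows "(\<lambda>r. vnorm k d (G r)) \<in> borel_measurable M"
proof (cases k)
  case Linf
  have "insert 0 ((\<lambda>i. \<bar>G r i\<bar>) ` {..<d}) = (\<lambda>i. if i < d then \<bar>G r i\<bar> else 0) ` {..d}" for r
  proof -
    have "{..d} = insert d {..<d}" by auto
    then show ?thesis by (auto simp: image_iff)
  qed
  moreover have "(\<lambda>r. Max ((\<lambda>i. if i < d then \<bar>G r i\<bar> else 0) ` {..d})) \<in> borel_measurable M"
  proof (rule borel_measurable_Max)
    show "(\<lambda>r. if i < d then \<bar>G r i\<bar> else 0) \<in> borel_measurable M" for i
      by (cases "i < d") (use assms in auto)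
  qed simp
  ultimately show ?thesis using Linf by (simp add: vnorm_def)
qed (use assms in \<open>simp_all add: vnorm_def\<close>)

lemma mean_estimation_alg_measurable_error:
  assumes "mean_estimation_alg n d k y rcv out" and "valid_input n d k y x"
  shows "(\<lambda>r. vnorm k d (EST out rcv x r - mean n x)) \<in> borel_measurable random_string"
proof (rule borel_measurable_vnorm)
  fix i assume "i < d"
  then have "integrable random_string (\<lambda>r. EST out rcv x r i)"
    using assms by (auto simp: mean_estimation_alg_def)
  then show "(\<lambda>r. (EST out rcv x r - mean n x) i) \<in> borel_measurable random_string"
    by (simp add: borel_measurable_integrable)
qed

lemma mean_estimation_alg_measurable_length:
  assumes "mean_estimation_alg n d k y rcv out" and "valid_input n d k y x" and "v < n"
  shows "(\<lambda>r. real (length (rcv v x r))) \<in> borel_measurable random_string"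
proof -
  have "rcv v x \<in> random_string \<rightarrow>\<^sub>M count_space UNIV"
    using assms by (auto simp: mean_estimation_alg_def)
  then show ?thesis by measurable
qed

lemma card_ge_le_sum_divide:
  fixes f :: "'a \<Rightarrow> real"
  assumes "finite A" and "0 < E" and "\<And>a. a \<in> A \<Longrightarrow> 0 \<le> f a"
  shows "real (card {a \<in> A. E \<le> f a}) \<le> (\<Sum>a\<in>A. f a / E)"
proof -
  have "real (card {a \<in> A. E \<le> f a}) = (\<Sum>a\<in>A. if E \<le> f a then 1 else 0)"
    using assms(1) by (simp add: sum.inter_filter[symmetric])
  also have "\<dots> \<le> (\<Sum>a\<in>A. f a / E)"
    using assms by (intro sum_mono) auto
  finally show ?thesis .
qed

lemma (in prob_space) ex_nn_integral_ge_of_card_le: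
  fixes f g :: "'i \<Rightarrow> 'a \<Rightarrow> real"
  assumes A: "finite A" "A \<noteq> {}"
    and f: "\<And>a. a \<in> A \<Longrightarrow> f a \<in> borel_measurable M" "\<And>a r. 0 \<le> f a r"
    and g: "\<And>a. a \<in> A \<Longrightarrow> g a \<in> borel_measurable M" "\<And>a r. 0 \<le> g a r"
    and E: "0 < E" and l: "0 < l" and b: "0 \<le> b"
    and count: "\<And>r. r \<in> space M \<Longrightarrow>
      real (card A) \<le> real (card {a \<in> A. E \<le> f a r}) + real (card {a \<in> A. l \<le> g a r}) + N"
    and budget: "\<And>a. a \<in> A \<Longrightarrow> (\<integral>\<^sup>+ r. g a r \<partial>M) \<le> ennreal b"
  shows "\<exists>a\<in>A. ennreal (E * (1 - N / card A - b / l)) \<le> (\<integral>\<^sup>+ r. f a r \<partial>M)"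
proof (rule ccontr)
  define t where "t = 1 - N / card A - b / l"
  assume "\<not> ?thesis"
  then have small: "(\<integral>\<^sup>+ r. f a r \<partial>M) < ennreal (E * t)" if "a \<in> A" for a
    using that by (auto simp: t_def not_le)
  have int_f: "integrable M (f a)" if "a \<in> A" for a
    using small[OF that] f(1)[OF that] f(2)
    by (intro integrableI_nonneg) (auto intro: order.strict_trans[OF _ ennreal_less_top])
  have int_g: "integrable M (g a)" if "a \<in> A" for a
    using budget[OF that] g(1)[OF that] g(2)
    by (intro integrableI_nonneg) (auto intro: le_less_trans[OF _ ennreal_less_top])
  have expectation_f: "expectation (f a) < E * t" if "a \<in> A" for a
    using small[OF that] nn_integral_eq_integral[OF int_f[OF that]] f(2)
    by (simp add: ennreal_less_iff integral_nonneg)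
  have expectation_g: "expectation (g a) \<le> b" if "a \<in> A" for a
    using budget[OF that] nn_integral_eq_integral[OF int_g[OF that]] g(2) b
    by simp
  have "real (card A) - N \<le> (\<Sum>a\<in>A. f a r / E + g a r / l)" if "r \<in> space M" for r
    using count[OF that] card_ge_le_sum_divide[OF A(1) E, of "\<lambda>a. f a r"]
      card_ge_le_sum_divide[OF A(1) l, of "\<lambda>a. g a r"] f(2) g(2)
    by (simp add: sum.distrib)
  then have "expectation (\<lambda>_. real (card A) - N)
      \<le> expectation (\<lambda>r. \<Sum>a\<in>A. f a r / E + g a r / l)"
    using int_f int_g by (intro integral_mono) auto
  also have "\<dots> = (\<Sum>a\<in>A. expectation (f a) / E + expectation (g a) / l)"
    using int_f int_g by (simp add: integral_sum integral_add)
  also have "\<dots> < (\<Sum>a\<in>A. t + b / l)"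
    using A expectation_f expectation_g E l
    by (intro sum_strict_mono add_less_le_mono divide_right_mono) (auto simp: field_simps)
  also have "\<dots> = real (card A) - N"
    using A by (simp add: t_def field_simps)
  finally show False by (simp add: prob_space)
qed

lemma exists_grid_size:
  fixes b :: real and d :: nat
  assumes b: "0 \<le> b" and d: "1 \<le> d"
  obtains m L :: nat where "1 \<le> m" and "12 * (2 ^ Suc L * (2 ^ d * m ^ (d div 5))) \<le> m ^ d"
    and "b < 5 / 6 * (real L + 1)" and "(real m)\<^sup>2 \<le> 2 ^ 18 * 2 powr (3 * b / real d)"
proof
  define j where "j = nat \<lceil>8 + 3 * b / (2 * real d)\<rceil>"
  define L where "L = nat \<lfloor>6 * b / 5\<rfloor>"
  have d0: "0 < real d" using d by simp
  have j: "8 + 3 * b / (2 * real d) \<le> real j" "real j < 9 + 3 * b / (2 * real d)"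
    unfolding j_def using b d0 by (simp_all add: of_nat_ceiling) linarith+
  have L: "real L \<le> 6 * b / 5" "6 * b / 5 < real L + 1"
    unfolding L_def using b by linarith+
  show "1 \<le> (2::nat) ^ j" by simp
  show "b < 5 / 6 * (real L + 1)" using L(2) by simp
  have "5 + L + d + j * (d div 5) \<le> j * d"
  proof -
    have "real j * real (d div 5) \<le> real j * (real d / 5)"
      by (intro mult_left_mono) linarith+
    moreover have "(8 + 3 * b / (2 * real d)) * (4 * real d / 5) \<le> real j * (4 * real d / 5)"
      using j d0 by (intro mult_right_mono) auto
    moreover have "(8 + 3 * b / (2 * real d)) * (4 * real d / 5) = 32 * real d / 5 + 6 * b / 5"
      using d0 by (simp add: field_simps)
    moreover have "real j * (4 * real d / 5) + real j * (real d / 5) = real j * real d"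
      by (simp add: field_simps)
    ultimately have "real (5 + L + d + j * (d div 5)) \<le> real (j * d)"
      using L d unfolding of_nat_add of_nat_mult by linarith
    then show ?thesis by linarith
  qed
  then have "(2::nat) ^ (4 + Suc L + d + j * (d div 5)) \<le> 2 ^ (j * d)"
    by (intro power_increasing) auto
  then show "12 * (2 ^ Suc L * (2 ^ d * (2 ^ j) ^ (d div 5))) \<le> ((2::nat) ^ j) ^ d"
    by (simp add: power_add power_mult)
  have "(real ((2::nat) ^ j))\<^sup>2 = 2 powr real (j * 2)"
    by (subst powr_realpow) (simp_all add: power_mult)
  also have "\<dots> \<le> 2 powr (18 + 3 * b / real d)"
    using j d0 by (intro powr_mono) (auto simp: field_simps)
  also have "\<dots> = 2 ^ 18 * 2 powr (3 * b / real d)"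
    by (simp add: powr_add)
  finally show "(real ((2::nat) ^ j))\<^sup>2 \<le> 2 ^ 18 * 2 powr (3 * b / real d)" .
qed

lemma valid_input_hard_input_grid:
  assumes "0 \<le> h" and "h * real m * vnorm k d (\<lambda>_. 1) \<le> y" and "a \<in> grid d m"
  shows "valid_input n d k y (hard_input n (grid_vec d h a))"
proof (rule valid_input_hard_input)
  show "vnorm k d (grid_vec d h a) \<le> y"
    using vnorm_grid_vec_le[OF assms(1,3), of k] assms(2) by linarith
  then show "0 \<le> y" using vnorm_mono_abs[of d "\<lambda>_. 0" "grid_vec d h a" k] by simp
qed (simp add: is_vec_def grid_vec_def)

lemma card_grid_le_bad_estimate_plus_long:
  fixes out rcv r
  assumes n: "2 \<le> n" and h: "0 < h" and m: "1 \<le> m" and y: "0 \<le> y"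
    and step: "y \<le> h * real m * vnorm k d (\<lambda>_. 1)"
  defines "X a \<equiv> hard_input n (grid_vec d h a)"
  shows "card (grid d m)
    \<le> card {a \<in> grid d m.
          y\<^sup>2 / (400 * (real m)\<^sup>2) \<le> (vnorm k d (EST out rcv (X a) r - mean n (X a)))\<^sup>2}
      + card {a \<in> grid d m. L < length (rcv 0 (X a) r)} + 2 ^ Suc L * (2 ^ d * m ^ (d div 5))"
    (is "_ \<le> card ?bad + card ?long + ?N")
proof -
  define c where "c = real (n - 1) / real n"
  define F where "F = out 0 (\<lambda>_. 0) r"
  define far where "far = {a \<in> grid d m.
    c * h * vnorm k d (\<lambda>_. 1) / 10 \<le> vnorm k d (F (rcv 0 (X a) r) - grid_vec d (c * h) a)}"
  have c: "1 / 2 \<le> c" using n by (simp add: c_def field_simps of_nat_diff)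
  have error: "EST out rcv (X a) r - mean n (X a) = F (rcv 0 (X a) r) - grid_vec d (c * h) a" for a
  proof -
    have "mean n (X a) = grid_vec d (c * h) a"
      by (simp add: X_def mean_hard_input grid_vec_def c_def fun_eq_iff)
    moreover have "EST out rcv (X a) r = F (rcv 0 (X a) r)"
      by (simp add: EST_def X_def F_def hard_input_def)
    ultimately show ?thesis by simp
  qed
  have "far \<subseteq> ?bad"
  proof
    fix a assume a: "a \<in> far"
    have "1 * (h * real m * vnorm k d (\<lambda>_. 1)) \<le> (2 * c) * (h * real m * vnorm k d (\<lambda>_. 1))"
      using c step y by (intro mult_right_mono) auto
    then have "y / (20 * real m) \<le> c * h * vnorm k d (\<lambda>_. 1) / 10"
      using step m by (simp add: field_simps)
    with a have "(y / (20 * real m))\<^sup>2 \<le> (vnorm k d (EST out rcv (X a) r - mean n (X a)))\<^sup>2"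
      unfolding error far_def using y m by (intro power_mono) auto
    then show "a \<in> ?bad" using a by (simp add: far_def power_divide power_mult_distrib)
  qed
  then have "card far \<le> card ?bad" by (intro card_mono) auto
  moreover have "card (grid d m) \<le> card far + card ?long + ?N"
    unfolding far_def using c h m by (intro card_grid_le_far_plus_long) auto
  ultimately show ?thesis by linarith
qed

lemma ex_hard_input_error_ge:
  assumes n: "2 \<le> n" and d: "1 \<le> d" and y: "0 < y" and b: "0 \<le> b" and m: "1 \<le> m"
    and alg: "mean_estimation_alg n d k y rcv out" and bits: "receives_at_most n d k y rcv b"
  defines "X a \<equiv> hard_input n (grid_vec d (y / (real m * vnorm k d (\<lambda>_. 1))) a)"
  shows "\<exists>a \<in> grid d m. valid_input n d k y (X a) \<and>
    ennreal (y\<^sup>2 / (400 * (real m)\<^sup>2)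
        * (1 - real (2 ^ Suc L * (2 ^ d * m ^ (d div 5))) / real (m ^ d) - b / (real L + 1)))
      \<le> (\<integral>\<^sup>+ r. ennreal ((vnorm k d (EST out rcv (X a) r - mean n (X a)))\<^sup>2) \<partial>random_string)"
proof -
  define h where "h = y / (real m * vnorm k d (\<lambda>_. 1))"
  define err where "err a r = (vnorm k d (EST out rcv (X a) r - mean n (X a)))\<^sup>2" for a r
  define len where "len a r = real (length (rcv 0 (X a) r))" for a r
  have step: "h * real m * vnorm k d (\<lambda>_. 1) = y" and h: "0 < h"
    using vnorm_ones_pos[OF d, of k] y m by (simp_all add: h_def)
  have valid: "valid_input n d k y (X a)" if "a \<in> grid d m" for a
    unfolding X_def h_def[symmetric] using h step that by (intro valid_input_hard_input_grid) auto
  have count: "real (card (grid d m))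
      \<le> real (card {a \<in> grid d m. y\<^sup>2 / (400 * (real m)\<^sup>2) \<le> err a r})
        + real (card {a \<in> grid d m. real L + 1 \<le> len a r})
        + real (2 ^ Suc L * (2 ^ d * m ^ (d div 5)))" for r
  proof -
    have "{a \<in> grid d m. L < length (rcv 0 (X a) r)} = {a \<in> grid d m. real L + 1 \<le> len a r}"
      by (auto simp: len_def)
    then have "card (grid d m) \<le> card {a \<in> grid d m. y\<^sup>2 / (400 * (real m)\<^sup>2) \<le> err a r}
        + card {a \<in> grid d m. real L + 1 \<le> len a r} + 2 ^ Suc L * (2 ^ d * m ^ (d div 5))"
      using card_grid_le_bad_estimate_plus_long[OF n h m less_imp_le[OF y], of k d out rcv r L] step
      unfolding err_def X_def h_def[symmetric] by simp
    then show ?thesis by (simp only: of_nat_add[symmetric] of_nat_le_iff)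
  qed
  have "grid d m \<noteq> {}"
    using m card_grid[of d m] by (metis card.empty power_not_zero zero_neq_one le_zero_eq)
  moreover have "0 < y\<^sup>2 / (400 * (real m)\<^sup>2)" using y m by simp
  moreover have "err a \<in> borel_measurable random_string" if "a \<in> grid d m" for a
    using mean_estimation_alg_measurable_error[OF alg valid[OF that]] unfolding err_def by measurable
  moreover have "len a \<in> borel_measurable random_string" if "a \<in> grid d m" for a
    using mean_estimation_alg_measurable_length[OF alg valid[OF that]] n unfolding len_def by simp
  moreover have "(\<integral>\<^sup>+ r. len a r \<partial>random_string) \<le> ennreal b" if "a \<in> grid d m" for a
    using bits valid[OF that] n by (auto simp: receives_at_most_def len_def)
  ultimately obtain a where "a \<in> grid d m" and "ennreal (y\<^sup>2 / (400 * (real m)\<^sup>2)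
      * (1 - real (2 ^ Suc L * (2 ^ d * m ^ (d div 5))) / card (grid d m) - b / (real L + 1)))
      \<le> (\<integral>\<^sup>+ r. err a r \<partial>random_string)"
    using prob_space.ex_nn_integral_ge_of_card_le[OF prob_space_random_string finite_grid[of d m],
        where f = err and g = len and E = "y\<^sup>2 / (400 * (real m)\<^sup>2)" and l = "real L + 1" and b = b
        and N = "real (2 ^ Suc L * (2 ^ d * m ^ (d div 5)))"] b count
    by (auto simp: err_def len_def)
  then show ?thesis using valid by (auto simp: err_def card_grid)
qed

lemma mean_estimation_lower_bound:
  assumes n: "2 \<le> n" and d: "1 \<le> d" and y: "0 < y" and b: "0 \<le> b"
    and alg: "mean_estimation_alg n d k y rcv out" and bits: "receives_at_most n d k y rcv b"
  shows "\<exists>x. valid_input n d k y x \<and>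
    ennreal (y\<^sup>2 * 2 powr (- 3 * b / real d) / (4800 * 2 ^ 18))
      \<le> (\<integral>\<^sup>+ r. ennreal ((vnorm k d (EST out rcv x r - mean n x))\<^sup>2) \<partial>random_string)"
proof -
  obtain m L :: nat where m: "1 \<le> m" and N: "12 * (2 ^ Suc L * (2 ^ d * m ^ (d div 5))) \<le> m ^ d"
    and L: "b < 5 / 6 * (real L + 1)" and m2: "(real m)\<^sup>2 \<le> 2 ^ 18 * 2 powr (3 * b / real d)"
    using exists_grid_size[OF b d] .
  define N where "N = 2 ^ Suc L * (2 ^ d * m ^ (d div 5))"
  define E where "E = y\<^sup>2 / (400 * (real m)\<^sup>2)"
  obtain x where valid: "valid_input n d k y x" and large:
    "ennreal (E * (1 - real N / real (m ^ d) - b / (real L + 1)))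
      \<le> (\<integral>\<^sup>+ r. ennreal ((vnorm k d (EST out rcv x r - mean n x))\<^sup>2) \<partial>random_string)"
    using ex_hard_input_error_ge[OF n d y b m alg bits, of L] unfolding E_def N_def by blast
  have "real (12 * N) \<le> real (m ^ d)"
    using N by (simp only: N_def of_nat_le_iff)
  then have "real N / real (m ^ d) \<le> 1 / 12"
    using m by (simp add: field_simps)
  moreover have "b / (real L + 1) < 5 / 6" using L by (simp add: field_simps)
  ultimately have "1 / 12 \<le> 1 - real N / real (m ^ d) - b / (real L + 1)"
    by linarith
  from mult_left_mono[OF this, of E]
  have "E / 12 \<le> E * (1 - real N / real (m ^ d) - b / (real L + 1))"
    by (simp add: E_def)
  moreover have "y\<^sup>2 * 2 powr (- 3 * b / real d) / (4800 * 2 ^ 18) \<le> E / 12"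
  proof -
    have "y\<^sup>2 * 2 powr (- 3 * b / real d) / (4800 * 2 ^ 18)
        = y\<^sup>2 / (4800 * (2 ^ 18 * 2 powr (3 * b / real d)))"
      by (simp add: powr_minus field_simps)
    also have "\<dots> \<le> y\<^sup>2 / (4800 * (real m)\<^sup>2)"
      using m2 m by (intro divide_left_mono mult_left_mono) auto
    finally show ?thesis by (simp add: E_def)
  qed
  ultimately have "ennreal (y\<^sup>2 * 2 powr (- 3 * b / real d) / (4800 * 2 ^ 18))
      \<le> ennreal (E * (1 - real N / real (m ^ d) - b / (real L + 1)))"
    by (intro ennreal_leI) linarith
  then show ?thesis using valid large by (blast intro: order_trans)
qed

theorem theorem6:
  shows "\<exists>c>0. \<forall>(n::nat) (d::nat) (k::norm_kind) (y::real) (b::real) rcv out.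
     2 \<le> n \<longrightarrow> 1 \<le> d \<longrightarrow> 0 < y \<longrightarrow> 0 \<le> b \<longrightarrow>
     mean_estimation_alg n d k y rcv out \<longrightarrow> receives_at_most n d k y rcv b \<longrightarrow>
     (\<exists>x. valid_input n d k y x \<and>
        (\<integral>\<^sup>+ r. ennreal ((vnorm k d (EST out rcv x r - mean n x))^2) \<partial>random_string)
          \<ge> ennreal (c * y^2 * 2 powr (- 3 * b / real d)))"
proof (intro exI[of _ "1 / (4800 * 2 ^ 18)"] conjI allI impI)
  fix n d :: nat and k y b rcv out
  assume "2 \<le> n" "1 \<le> d" "0 < y" "0 \<le> b"
    "mean_estimation_alg n d k y rcv out" "receives_at_most n d k y rcv b"
  from mean_estimation_lower_bound[OF this]
  show "\<exists>x. valid_input n d k y x \<and>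
        (\<integral>\<^sup>+ r. ennreal ((vnorm k d (EST out rcv x r - mean n x))^2) \<partial>random_string)
          \<ge> ennreal (1 / (4800 * 2 ^ 18) * y^2 * 2 powr (- 3 * b / real d))"
    by (simp add: mult.commute)
qed simp

end
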